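(* Let $R$ be a right or left Noetherian ring that is finitely presented (as a ring, or as an algebra over a fixed commutative base). Then every homomorphic image of $R$ is also finitely presented (in the same sense).
   Context: A ring (resp. algebra) is finitely presented if it is isomorphic to a free ring (resp. free algebra) on finitely many generators modulo a two-sided ideal generated by finitely many elements. *)

theory Defs
  imports "HOL-Algebra.QuotRing" "HOL-Algebra.IntRing"
begin

text \<open>The free associative unital algebra over a commutative ring K on the
  n generators x_0, ..., x_{n-1}: finitely supported K-valued functions on
  words (lists of generator indices below n), with convolution product.
  For K = the integers this is the free ring on n generators.\<close>

definition free_alg :: "('k, 'm) ring_scheme \<Rightarrow> nat \<Rightarrow> (nat list \<Rightarrow> 'k) ring" where
  "free_alg K n =
     \<lparr> carrier = {f. (\<forall>w. f w \<in> carrier K)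
                    \<and> finite {w. f w \<noteq> \<zero>\<^bsub>K\<^esub>}
                    \<and> (\<forall>w. f w \<noteq> \<zero>\<^bsub>K\<^esub> \<longrightarrow> set w \<subseteq> {..<n})},
       mult = (\<lambda>f g w. finsum K (\<lambda>i. f (take i w) \<otimes>\<^bsub>K\<^esub> g (drop i w)) {..length w}),
       one = (\<lambda>w. if w = [] then \<one>\<^bsub>K\<^esub> else \<zero>\<^bsub>K\<^esub>),
       zero = (\<lambda>w. \<zero>\<^bsub>K\<^esub>),
       add = (\<lambda>f g w. f w \<oplus>\<^bsub>K\<^esub> g w) \<rparr>"

definition free_const :: "('k, 'm) ring_scheme \<Rightarrow> 'k \<Rightarrow> (nat list \<Rightarrow> 'k)" where
  "free_const K c = (\<lambda>w. if w = [] then c else \<zero>\<^bsub>K\<^esub>)"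

definition fp_ring :: "('a, 'b) ring_scheme \<Rightarrow> bool" where
  "fp_ring R \<longleftrightarrow> (\<exists>n Rel. finite Rel \<and> Rel \<subseteq> carrier (free_alg \<Z> n) \<and>
      R \<simeq> (free_alg \<Z> n Quot genideal (free_alg \<Z> n) Rel))"

definition fp_alg :: "('k, 'm) ring_scheme \<Rightarrow> ('a, 'b) ring_scheme \<Rightarrow> ('k \<Rightarrow> 'a) \<Rightarrow> bool" where
  "fp_alg K R \<iota> \<longleftrightarrow> (\<exists>n Rel. finite Rel \<and> Rel \<subseteq> carrier (free_alg K n) \<and>
      (\<exists>h \<in> ring_iso R (free_alg K n Quot genideal (free_alg K n) Rel).
         \<forall>c \<in> carrier K. h (\<iota> c) = genideal (free_alg K n) Rel +>\<^bsub>free_alg K n\<^esub> free_const K c))"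

definition is_algebra :: "('k, 'm) ring_scheme \<Rightarrow> ('a, 'b) ring_scheme \<Rightarrow> ('k \<Rightarrow> 'a) \<Rightarrow> bool" where
  "is_algebra K R \<iota> \<longleftrightarrow> cring K \<and> ring R \<and> \<iota> \<in> ring_hom K R \<and>
      (\<forall>c \<in> carrier K. \<forall>x \<in> carrier R. \<iota> c \<otimes>\<^bsub>R\<^esub> x = x \<otimes>\<^bsub>R\<^esub> \<iota> c)"

definition left_ideal :: "'a set \<Rightarrow> ('a, 'b) ring_scheme \<Rightarrow> bool" where
  "left_ideal I R \<longleftrightarrow> additive_subgroup I R \<and>
      (\<forall>r \<in> carrier R. \<forall>x \<in> I. r \<otimes>\<^bsub>R\<^esub> x \<in> I)"

definition right_ideal :: "'a set \<Rightarrow> ('a, 'b) ring_scheme \<Rightarrow> bool" where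
  "right_ideal I R \<longleftrightarrow> additive_subgroup I R \<and>
      (\<forall>r \<in> carrier R. \<forall>x \<in> I. x \<otimes>\<^bsub>R\<^esub> r \<in> I)"

definition left_noetherian :: "('a, 'b) ring_scheme \<Rightarrow> bool" where
  "left_noetherian R \<longleftrightarrow> ring R \<and>
     (\<forall>I :: nat \<Rightarrow> 'a set. (\<forall>k. left_ideal (I k) R) \<and> (\<forall>k. I k \<subseteq> I (Suc k))
        \<longrightarrow> (\<exists>N. \<forall>k\<ge>N. I k = I N))"

definition right_noetherian :: "('a, 'b) ring_scheme \<Rightarrow> bool" where
  "right_noetherian R \<longleftrightarrow> ring R \<and>
     (\<forall>I :: nat \<Rightarrow> 'a set. (\<forall>k. right_ideal (I k) R) \<and> (\<forall>k. I k \<subseteq> I (Suc k))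
        \<longrightarrow> (\<exists>N. \<forall>k\<ge>N. I k = I N))"

end

theory Submission
  imports Defs
begin

text \<open>A presentation \<open>A \<cong> F / \<langle>Rel\<rangle>\<close> with \<open>F\<close> free gives a surjection \<open>\<Phi> : F \<rightarrow> A\<close> with
  kernel \<open>\<langle>Rel\<rangle>\<close>, and for a surjection \<open>g : A \<rightarrow> B\<close> the ring \<open>B\<close> is \<open>F / K\<close> with
  \<open>K = ker (g \<circ> \<Phi>)\<close>. Taking images under \<open>\<Phi>\<close> embeds the ideals of \<open>F\<close> containing
  \<open>\<langle>Rel\<rangle>\<close> into the two-sided ideals of \<open>A\<close>, which satisfy the ascending chain condition
  because they are in particular one-sided ideals. Hence adjoining elements of \<open>K\<close> to \<open>Rel\<close>
  one at a time exhausts \<open>K\<close> after finitely many steps, and \<open>B\<close> is finitely presented.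
  The isomorphism \<open>B \<cong> F / K\<close> sends \<open>g x\<close> to the coset of any lift of \<open>x\<close>, so it respects
  the structure maps of algebras.\<close>

context ring begin

lemma finsum_triangle_swap:
  fixes N :: nat
  assumes T: "\<And>j i. T j i \<in> carrier R"
  shows "(\<Oplus>i\<in>{..N}. \<Oplus>j\<in>{..i}. T j i) = (\<Oplus>j\<in>{..N}. \<Oplus>k\<in>{..N - j}. T j (j + k))"
proof (induct N)
  case 0 then show ?case using T by (simp add: Pi_def)
next
  case (Suc N)
  have "(\<Oplus>j\<in>{..Suc N}. \<Oplus>k\<in>{..Suc N - j}. T j (j + k))
     = (\<Oplus>j\<in>{..N}. (\<Oplus>k\<in>{..N - j}. T j (j + k)) \<oplus> T j (Suc N)) \<oplus> T (Suc N) (Suc N)"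
    using T by (simp cong: finsum_cong add: Suc_diff_le Pi_def a_ac)
  also have "\<dots> = (\<Oplus>j\<in>{..N}. \<Oplus>k\<in>{..N - j}. T j (j + k)) \<oplus> (\<Oplus>j\<in>{..N}. T j (Suc N)) \<oplus> T (Suc N) (Suc N)"
    using T by (simp add: Pi_def)
  finally show ?case using T Suc by (simp add: Pi_def a_ac)
qed


abbreviation "FA n \<equiv> free_alg R n"

lemma free_alg_carrier: "f \<in> carrier (FA n) \<longleftrightarrow> (\<forall>w. f w \<in> carrier R) \<and> finite {w. f w \<noteq> \<zero>}
   \<and> (\<forall>w. f w \<noteq> \<zero> \<longrightarrow> set w \<subseteq> {..<n})"
  by (simp add: free_alg_def)

lemma free_alg_mult: "f \<otimes>\<^bsub>FA n\<^esub> g = (\<lambda>w. \<Oplus>i\<in>{..length w}. f (take i w) \<otimes> g (drop i w))"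
  by (simp add: free_alg_def)
lemma free_alg_add: "f \<oplus>\<^bsub>FA n\<^esub> g = (\<lambda>w. f w \<oplus> g w)"
  by (simp add: free_alg_def)
lemma free_alg_zero: "\<zero>\<^bsub>FA n\<^esub> = (\<lambda>w. \<zero>)"
  by (simp add: free_alg_def)
lemma free_alg_one: "\<one>\<^bsub>FA n\<^esub> = (\<lambda>w. if w = [] then \<one> else \<zero>)"
  by (simp add: free_alg_def)

lemma free_alg_add_closed:
  assumes f: "f \<in> carrier (FA n)" and g: "g \<in> carrier (FA n)"
  shows "f \<oplus>\<^bsub>FA n\<^esub> g \<in> carrier (FA n)"
proof -
  have "{w. f w \<oplus> g w \<noteq> \<zero>} \<subseteq> {w. f w \<noteq> \<zero>} \<union> {w. g w \<noteq> \<zero>}"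
    using f g by (auto simp: free_alg_carrier)
  moreover have "finite ({w. f w \<noteq> \<zero>} \<union> {w. g w \<noteq> \<zero>})" using f g by (simp add: free_alg_carrier)
  ultimately have fin: "finite {w. f w \<oplus> g w \<noteq> \<zero>}" by (rule finite_subset)
  have fc: "\<And>w. f w \<in> carrier R" and gc: "\<And>w. g w \<in> carrier R" using f g by (auto simp: free_alg_carrier)
  show ?thesis unfolding free_alg_add free_alg_carrier
  proof (intro conjI allI impI fin)
    fix w show "f w \<oplus> g w \<in> carrier R" using fc gc by simp
  next
    fix w assume "f w \<oplus> g w \<noteq> \<zero>"
    then have "f w \<noteq> \<zero> \<or> g w \<noteq> \<zero>" using fc gc by auto
    then show "set w \<subseteq> {..<n}" using f g by (auto simp: free_alg_carrier)
  qed
qed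

lemma free_alg_uminus_closed:
  assumes f: "f \<in> carrier (FA n)"
  shows "(\<lambda>w. \<ominus> f w) \<in> carrier (FA n)"
proof -
  have "{w. \<ominus> f w \<noteq> \<zero>} = {w. f w \<noteq> \<zero>}"
    using f by (auto simp: free_alg_carrier)
  then show ?thesis using f unfolding free_alg_carrier by auto
qed

lemma free_alg_one_closed: "\<one>\<^bsub>FA n\<^esub> \<in> carrier (FA n)"
proof -
  have "{w. (if w = [] then \<one> else \<zero>) \<noteq> \<zero>} \<subseteq> {[]}" by auto
  then show ?thesis unfolding free_alg_one free_alg_carrier by (auto intro: finite_subset)
qed

lemma free_alg_zero_closed: "\<zero>\<^bsub>FA n\<^esub> \<in> carrier (FA n)"
  unfolding free_alg_zero free_alg_carrier by auto

lemma free_alg_mult_closed: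
  assumes f: "f \<in> carrier (FA n)" and g: "g \<in> carrier (FA n)"
  shows "f \<otimes>\<^bsub>FA n\<^esub> g \<in> carrier (FA n)"
proof -
  let ?h = "\<lambda>w. \<Oplus>i\<in>{..length w}. f (take i w) \<otimes> g (drop i w)"
  have fc: "\<And>w. f w \<in> carrier R" and gc: "\<And>w. g w \<in> carrier R" using f g by (auto simp: free_alg_carrier)
  have nz: "\<exists>i. f (take i w) \<noteq> \<zero> \<and> g (drop i w) \<noteq> \<zero>" if "?h w \<noteq> \<zero>" for w
  proof (rule ccontr)
    assume "\<not> ?thesis"
    then have "\<And>i. f (take i w) \<otimes> g (drop i w) = \<zero>" using fc gc by (metis l_null r_null)
    then have "?h w = (\<Oplus>i\<in>{..length w}. \<zero>)" by (intro finsum_cong) auto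
    then show False using that by simp
  qed
  have "{w. ?h w \<noteq> \<zero>} \<subseteq> (\<lambda>(u,v). u @ v) ` ({w. f w \<noteq> \<zero>} \<times> {w. g w \<noteq> \<zero>})"
  proof
    fix w assume "w \<in> {w. ?h w \<noteq> \<zero>}"
    then obtain i where "f (take i w) \<noteq> \<zero>" "g (drop i w) \<noteq> \<zero>" using nz by blast
    then show "w \<in> (\<lambda>(u,v). u @ v) ` ({w. f w \<noteq> \<zero>} \<times> {w. g w \<noteq> \<zero>})"
      by (auto intro!: image_eqI[of _ _ "(take i w, drop i w)"])
  qed
  moreover have "finite ((\<lambda>(u,v). u @ v) ` ({w. f w \<noteq> \<zero>} \<times> {w. g w \<noteq> \<zero>}))"
    using f g by (simp add: free_alg_carrier)
  moreover have "set w \<subseteq> {..<n}" if hw: "?h w \<noteq> \<zero>" for w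
  proof -
    obtain i where "f (take i w) \<noteq> \<zero>" "g (drop i w) \<noteq> \<zero>" using nz hw by blast
    then have "set (take i w) \<subseteq> {..<n}" "set (drop i w) \<subseteq> {..<n}" using f g by (auto simp: free_alg_carrier)
    then show ?thesis by (metis append_take_drop_id set_append Un_subset_iff)
  qed
  ultimately show ?thesis unfolding free_alg_mult free_alg_carrier using fc gc
    by (auto intro: finite_subset simp: Pi_def)
qed

lemma free_alg_mult_assoc:
  assumes f: "f \<in> carrier (FA n)" and g: "g \<in> carrier (FA n)" and h: "h \<in> carrier (FA n)"
  shows "(f \<otimes>\<^bsub>FA n\<^esub> g) \<otimes>\<^bsub>FA n\<^esub> h = f \<otimes>\<^bsub>FA n\<^esub> (g \<otimes>\<^bsub>FA n\<^esub> h)"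
proof
  fix w :: "nat list"
  have fc: "\<And>w. f w \<in> carrier R" and gc: "\<And>w. g w \<in> carrier R" and hc: "\<And>w. h w \<in> carrier R"
    using f g h by (auto simp: free_alg_carrier)
  define N where "N = length w"
  define T where "T = (\<lambda>j i. (f (take j w) \<otimes> g (drop j (take i w))) \<otimes> h (drop i w))"
  have Tc: "\<And>j i. T j i \<in> carrier R" unfolding T_def using fc gc hc by auto
  have eq1: "(\<Oplus>j\<in>{..length (take i w)}. f (take j (take i w)) \<otimes> g (drop j (take i w))) \<otimes> h (drop i w)
       = (\<Oplus>j\<in>{..i}. T j i)" if "i \<in> {..N}" for i
  proof -
    from that have il: "length (take i w) = i" by (simp add: N_def)
    have "(\<Oplus>j\<in>{..length (take i w)}. f (take j (take i w)) \<otimes> g (drop j (take i w)))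
        = (\<Oplus>j\<in>{..i}. f (take j w) \<otimes> g (drop j (take i w)))"
      unfolding il by (intro finsum_cong) (auto simp: fc gc min_def)
    moreover have "(\<Oplus>j\<in>{..i}. f (take j w) \<otimes> g (drop j (take i w))) \<otimes> h (drop i w) = (\<Oplus>j\<in>{..i}. T j i)"
      unfolding T_def by (rule finsum_ldistr) (auto simp: fc gc hc)
    ultimately show ?thesis by simp
  qed
  have "((f \<otimes>\<^bsub>FA n\<^esub> g) \<otimes>\<^bsub>FA n\<^esub> h) w = (\<Oplus>i\<in>{..N}. \<Oplus>j\<in>{..i}. T j i)"
    unfolding free_alg_mult N_def[symmetric]
  proof (rule add.finprod_cong'[OF refl])
    show "(\<lambda>i. \<Oplus>j\<in>{..i}. T j i) \<in> {..N} \<rightarrow> carrier R" using Tc by (auto intro: finsum_closed)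
  next
    fix i assume "i \<in> {..N}" then show "(\<Oplus>j\<in>{..length (take i w)}. f (take j (take i w)) \<otimes> g (drop j (take i w))) \<otimes> h (drop i w)
       = (\<Oplus>j\<in>{..i}. T j i)" by (rule eq1)
  qed
  also have "\<dots> = (\<Oplus>j\<in>{..N}. \<Oplus>k\<in>{..N - j}. T j (j + k))"
    by (rule finsum_triangle_swap[OF Tc])
  also have "\<dots> = (f \<otimes>\<^bsub>FA n\<^esub> (g \<otimes>\<^bsub>FA n\<^esub> h)) w"
    unfolding free_alg_mult N_def T_def
    by (intro finsum_cong) (auto simp: finsum_rdistr fc gc hc Pi_def m_assoc take_drop add.commute)
  finally show "((f \<otimes>\<^bsub>FA n\<^esub> g) \<otimes>\<^bsub>FA n\<^esub> h) w = (f \<otimes>\<^bsub>FA n\<^esub> (g \<otimes>\<^bsub>FA n\<^esub> h)) w" .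
qed


lemma free_alg_l_one:
  assumes f: "f \<in> carrier (FA n)"
  shows "\<one>\<^bsub>FA n\<^esub> \<otimes>\<^bsub>FA n\<^esub> f = f"
proof
  fix w :: "nat list"
  have fc: "\<And>w. f w \<in> carrier R" using f by (auto simp: free_alg_carrier)
  have "(\<one>\<^bsub>FA n\<^esub> \<otimes>\<^bsub>FA n\<^esub> f) w = (\<Oplus>i\<in>{..length w}. if 0 = i then f (drop i w) else \<zero>)"
    unfolding free_alg_mult free_alg_one by (intro finsum_cong) (auto simp: fc simp_implies_def)
  also have "\<dots> = f (drop 0 w)"
    by (rule add.finprod_singleton) (auto simp: fc)
  finally show "(\<one>\<^bsub>FA n\<^esub> \<otimes>\<^bsub>FA n\<^esub> f) w = f w" by simp
qed

lemma free_alg_r_one: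
  assumes f: "f \<in> carrier (FA n)"
  shows "f \<otimes>\<^bsub>FA n\<^esub> \<one>\<^bsub>FA n\<^esub> = f"
proof
  fix w :: "nat list"
  have fc: "\<And>w. f w \<in> carrier R" using f by (auto simp: free_alg_carrier)
  have "(f \<otimes>\<^bsub>FA n\<^esub> \<one>\<^bsub>FA n\<^esub>) w = (\<Oplus>i\<in>{..length w}. if length w = i then f (take i w) else \<zero>)"
    unfolding free_alg_mult free_alg_one by (intro finsum_cong) (auto simp: fc simp_implies_def)
  also have "\<dots> = f (take (length w) w)"
    by (rule add.finprod_singleton) (auto simp: fc)
  finally show "(f \<otimes>\<^bsub>FA n\<^esub> \<one>\<^bsub>FA n\<^esub>) w = f w" by simp
qed

lemma free_alg_l_distr:
  assumes f: "f \<in> carrier (FA n)" and g: "g \<in> carrier (FA n)" and h: "h \<in> carrier (FA n)"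
  shows "(f \<oplus>\<^bsub>FA n\<^esub> g) \<otimes>\<^bsub>FA n\<^esub> h = f \<otimes>\<^bsub>FA n\<^esub> h \<oplus>\<^bsub>FA n\<^esub> g \<otimes>\<^bsub>FA n\<^esub> h"
proof
  fix w :: "nat list"
  have fc: "\<And>w. f w \<in> carrier R" and gc: "\<And>w. g w \<in> carrier R" and hc: "\<And>w. h w \<in> carrier R"
    using f g h by (auto simp: free_alg_carrier)
  have "((f \<oplus>\<^bsub>FA n\<^esub> g) \<otimes>\<^bsub>FA n\<^esub> h) w = (\<Oplus>i\<in>{..length w}. f (take i w) \<otimes> h (drop i w) \<oplus> g (take i w) \<otimes> h (drop i w))"
    unfolding free_alg_mult free_alg_add by (intro finsum_cong) (auto simp: fc gc hc l_distr)
  also have "\<dots> = (f \<otimes>\<^bsub>FA n\<^esub> h \<oplus>\<^bsub>FA n\<^esub> g \<otimes>\<^bsub>FA n\<^esub> h) w"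
    unfolding free_alg_mult free_alg_add by (rule finsum_addf) (auto simp: fc gc hc)
  finally show "((f \<oplus>\<^bsub>FA n\<^esub> g) \<otimes>\<^bsub>FA n\<^esub> h) w = (f \<otimes>\<^bsub>FA n\<^esub> h \<oplus>\<^bsub>FA n\<^esub> g \<otimes>\<^bsub>FA n\<^esub> h) w" .
qed

lemma free_alg_r_distr:
  assumes f: "f \<in> carrier (FA n)" and g: "g \<in> carrier (FA n)" and h: "h \<in> carrier (FA n)"
  shows "h \<otimes>\<^bsub>FA n\<^esub> (f \<oplus>\<^bsub>FA n\<^esub> g) = h \<otimes>\<^bsub>FA n\<^esub> f \<oplus>\<^bsub>FA n\<^esub> h \<otimes>\<^bsub>FA n\<^esub> g"
proof
  fix w :: "nat list"
  have fc: "\<And>w. f w \<in> carrier R" and gc: "\<And>w. g w \<in> carrier R" and hc: "\<And>w. h w \<in> carrier R"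
    using f g h by (auto simp: free_alg_carrier)
  have "(h \<otimes>\<^bsub>FA n\<^esub> (f \<oplus>\<^bsub>FA n\<^esub> g)) w = (\<Oplus>i\<in>{..length w}. h (take i w) \<otimes> f (drop i w) \<oplus> h (take i w) \<otimes> g (drop i w))"
    unfolding free_alg_mult free_alg_add by (intro finsum_cong) (auto simp: fc gc hc r_distr)
  also have "\<dots> = (h \<otimes>\<^bsub>FA n\<^esub> f \<oplus>\<^bsub>FA n\<^esub> h \<otimes>\<^bsub>FA n\<^esub> g) w"
    unfolding free_alg_mult free_alg_add by (rule finsum_addf) (auto simp: fc gc hc)
  finally show "(h \<otimes>\<^bsub>FA n\<^esub> (f \<oplus>\<^bsub>FA n\<^esub> g)) w = (h \<otimes>\<^bsub>FA n\<^esub> f \<oplus>\<^bsub>FA n\<^esub> h \<otimes>\<^bsub>FA n\<^esub> g) w" .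
qed

lemma ring_free_alg: "ring (FA n)"
proof (rule ringI)
  show "abelian_group (FA n)"
  proof (rule abelian_groupI)
    fix x y z assume x: "x \<in> carrier (FA n)" and y: "y \<in> carrier (FA n)" and z: "z \<in> carrier (FA n)"
    show "x \<oplus>\<^bsub>FA n\<^esub> y \<oplus>\<^bsub>FA n\<^esub> z = x \<oplus>\<^bsub>FA n\<^esub> (y \<oplus>\<^bsub>FA n\<^esub> z)"
      using x y z by (auto simp: free_alg_add free_alg_carrier a_assoc)
  next
    fix x y assume x: "x \<in> carrier (FA n)" and y: "y \<in> carrier (FA n)"
    show "x \<oplus>\<^bsub>FA n\<^esub> y = y \<oplus>\<^bsub>FA n\<^esub> x"
      using x y by (auto simp: free_alg_add free_alg_carrier a_comm)
  next
    fix x assume x: "x \<in> carrier (FA n)"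
    show "\<zero>\<^bsub>FA n\<^esub> \<oplus>\<^bsub>FA n\<^esub> x = x"
      using x by (auto simp: free_alg_add free_alg_zero free_alg_carrier)
    show "\<exists>y\<in>carrier (FA n). y \<oplus>\<^bsub>FA n\<^esub> x = \<zero>\<^bsub>FA n\<^esub>"
      using x free_alg_uminus_closed[OF x] by (intro bexI[of _ "\<lambda>w. \<ominus> x w"]) (auto simp: free_alg_add free_alg_zero free_alg_carrier l_neg)
  qed (auto intro: free_alg_add_closed free_alg_zero_closed)
next
  show "monoid (FA n)"
    by (rule monoidI) (auto intro: free_alg_mult_closed free_alg_one_closed free_alg_mult_assoc free_alg_l_one free_alg_r_one)
qed (auto intro: free_alg_l_distr free_alg_r_distr)

lemma free_const_closed: "c \<in> carrier R \<Longrightarrow> free_const R c \<in> carrier (FA n)"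
proof -
  assume c: "c \<in> carrier R"
  have "{w. (if w = [] then c else \<zero>) \<noteq> \<zero>} \<subseteq> {[]}" by auto
  then show ?thesis unfolding free_const_def free_alg_carrier using c by (auto intro: finite_subset)
qed

end

lemma ideal_imp_left_right_ideal: "ideal I R \<Longrightarrow> left_ideal I R \<and> right_ideal I R"
  unfolding left_ideal_def right_ideal_def
  by (auto intro: ideal.axioms(1) ideal.I_l_closed ideal.I_r_closed)

lemma one_sided_noetherian_ideal_chain_stabilizes:
  assumes "left_noetherian R \<or> right_noetherian R"
    and "\<And>k. ideal (I k) R" and "\<And>k. I k \<subseteq> I (Suc k)"
  shows "\<exists>N. \<forall>k\<ge>N. I k = I N"
  using assms ideal_imp_left_right_ideal
  unfolding left_noetherian_def right_noetherian_def by blast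

lemma (in ring_hom_ring) ideal_image:
  assumes surj: "h ` carrier R = carrier S" and I: "ideal I R"
  shows "ideal (h ` I) S"
proof -
  interpret I: ideal I R by (rule I)
  show ?thesis
  proof (rule idealI)
    show "ring S" by (rule S.ring_axioms)
    show "subgroup (h ` I) (add_monoid S)" by (rule img_is_add_subgroup[OF I.a_subgroup])
  next
    fix a x assume "a \<in> h ` I" "x \<in> carrier S"
    then obtain b y where b: "b \<in> I" "a = h b" and y: "y \<in> carrier R" "x = h y" using surj by blast
    have "x \<otimes>\<^bsub>S\<^esub> a = h (y \<otimes> b)" "a \<otimes>\<^bsub>S\<^esub> x = h (b \<otimes> y)"
      using b y I.Icarr by auto
    moreover have "y \<otimes> b \<in> I" "b \<otimes> y \<in> I" using b y by (auto intro: I.I_l_closed I.I_r_closed)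
    ultimately show "x \<otimes>\<^bsub>S\<^esub> a \<in> h ` I" "a \<otimes>\<^bsub>S\<^esub> x \<in> h ` I" by auto
  qed
qed

lemma (in ring_hom_ring) mem_ideal_if_image_mem:
  assumes J: "ideal J R" "a_kernel R S h \<subseteq> J" and x: "x \<in> carrier R" "h x \<in> h ` J"
  shows "x \<in> J"
proof -
  interpret J: ideal J R by (rule J(1))
  obtain y where y: "y \<in> J" "h x = h y" using x(2) by blast
  have yc: "y \<in> carrier R" using y(1) by (rule J.Icarr)
  have "x \<ominus> y \<in> a_kernel R S h"
    unfolding a_kernel_def' using x(1) yc y(2) by (simp add: R.minus_eq S.r_neg)
  then have "(x \<ominus> y) \<oplus> y \<in> J" using J(2) y(1) by blast
  moreover have "(x \<ominus> y) \<oplus> y = x" using x(1) yc by (simp add: R.minus_eq R.add.m_assoc R.l_neg)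
  ultimately show ?thesis by simp
qed

lemma (in ring_hom_ring) ideal_chain_above_kernel_stabilizes:
  assumes surj: "h ` carrier R = carrier S" and noeth: "left_noetherian S \<or> right_noetherian S"
    and J: "\<And>k. ideal (J k) R" "\<And>k. a_kernel R S h \<subseteq> J k" "\<And>k. J k \<subseteq> J (Suc k)"
  shows "\<exists>N. \<forall>k\<ge>N. J k = J N"
proof -
  have "h ` J k \<subseteq> h ` J (Suc k)" for k using J(3) by (rule image_mono)
  then obtain N where N: "\<forall>k\<ge>N. h ` J k = h ` J N"
    using one_sided_noetherian_ideal_chain_stabilizes[of S "\<lambda>k. h ` J k", OF noeth ideal_image[OF surj J(1)]]
    by blast
  have "J k = J N" if "k \<ge> N" for k
  proof
    show "J N \<subseteq> J k" using lift_Suc_mono_le[of J, OF J(3) that] .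
    show "J k \<subseteq> J N"
      using N that J mem_ideal_if_image_mem[OF J(1,2)] by (blast dest: ideal.Icarr)
  qed
  then show ?thesis by blast
qed

lemma (in ring) ideal_finitely_generated_over:
  assumes Rel: "Rel \<subseteq> carrier R" and K: "ideal K R" "Rel \<subseteq> K"
    and acc: "\<And>J. (\<And>k. ideal (J k) R) \<Longrightarrow> (\<And>k. Idl Rel \<subseteq> J k) \<Longrightarrow> (\<And>k. J k \<subseteq> J (Suc k))
               \<Longrightarrow> \<exists>N. \<forall>k\<ge>N. J k = J N"
  shows "\<exists>E. finite E \<and> E \<subseteq> K \<and> K = Idl (Rel \<union> E)"
proof (rule ccontr)
  assume no_finite_E: "\<not> ?thesis"
  \<comment> \<open>then adjoining elements of \<open>K\<close> one at a time yields a strictly increasing chain\<close>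
  have K_carrier: "K \<subseteq> carrier R" using ideal.Icarr[OF K(1)] by blast
  define fresh where "fresh E = (SOME x. x \<in> K \<and> x \<notin> Idl (Rel \<union> E))" for E
  have "\<exists>x. x \<in> K \<and> x \<notin> Idl (Rel \<union> E)" if "finite E" "E \<subseteq> K" for E
  proof -
    have "Idl (Rel \<union> E) \<subseteq> K" using genideal_minimal[OF K(1)] K(2) that(2) by blast
    moreover have "K \<noteq> Idl (Rel \<union> E)" using no_finite_E that by blast
    ultimately show ?thesis by blast
  qed
  then have fresh: "fresh E \<in> K" "fresh E \<notin> Idl (Rel \<union> E)" if "finite E" "E \<subseteq> K" for E
    unfolding fresh_def using that by (metis (mono_tags, lifting) someI_ex)+
  define Es where "Es = rec_nat {} (\<lambda>_ E. insert (fresh E) E)"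
  have Es_Suc: "Es (Suc k) = insert (fresh (Es k)) (Es k)" for k unfolding Es_def by simp
  have Es: "finite (Es k) \<and> Es k \<subseteq> K" for k
    by (induct k) (auto simp: Es_def fresh)
  obtain N where N: "\<forall>k\<ge>N. Idl (Rel \<union> Es k) = Idl (Rel \<union> Es N)"
  proof -
    have "\<exists>N. \<forall>k\<ge>N. Idl (Rel \<union> Es k) = Idl (Rel \<union> Es N)"
    proof (rule acc)
      fix k
      show "ideal (Idl (Rel \<union> Es k)) R" using Es Rel K_carrier by (blast intro: genideal_ideal)
      have "Rel \<union> Es (Suc k) \<subseteq> carrier R" using Es Rel K_carrier by blast
      then show "Idl Rel \<subseteq> Idl (Rel \<union> Es k)" "Idl (Rel \<union> Es k) \<subseteq> Idl (Rel \<union> Es (Suc k))"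
        by (intro subset_Idl_subset; auto simp: Es_Suc)+
    qed
    then show ?thesis using that by blast
  qed
  have "fresh (Es N) \<in> Idl (Rel \<union> Es (Suc N))"
    using genideal_self[of "Rel \<union> Es (Suc N)"] Es[of "Suc N"] Rel K_carrier by (auto simp: Es_Suc)
  with N fresh(2)[of "Es N"] Es show False by (metis le_SucI order_refl)
qed

lemma (in ring_hom_ring) ring_iso_FactRing_kernel:
  assumes surj: "h ` carrier R = carrier S"
  shows "\<exists>\<psi> \<in> ring_iso S (R Quot a_kernel R S h). \<forall>x \<in> carrier R. \<psi> (h x) = a_kernel R S h +> x"
proof -
  let ?Q = "R Quot a_kernel R S h" and ?\<theta> = "\<lambda>X. the_elem (h ` X)"
  have \<theta>: "?\<theta> \<in> ring_iso ?Q S" by (rule FactRing_iso_set[OF surj])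
  have "ring ?Q" by (rule ideal.quotient_is_ring[OF kernel_is_ideal])
  then have inv: "inv_into (carrier ?Q) ?\<theta> \<in> ring_iso S ?Q" by (rule ring_iso_set_sym[OF _ \<theta>])
  have "inv_into (carrier ?Q) ?\<theta> (h x) = a_kernel R S h +> x" if x: "x \<in> carrier R" for x
  proof -
    have "a_kernel R S h +> x \<in> carrier ?Q" using x by (auto simp: FactRing_def A_RCOSETS_def')
    moreover have "inj_on ?\<theta> (carrier ?Q)" using \<theta> by (simp add: ring_iso_def bij_betw_def)
    ultimately show ?thesis using the_elem_simp[OF x] by (metis inv_into_f_f)
  qed
  with inv show ?thesis by blast
qed

lemma (in ideal) ring_iso_FactRing_imp_surj_hom:
  assumes A: "ring A" and \<phi>: "\<phi> \<in> ring_iso A (R Quot I)"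
  shows "\<exists>\<Phi> \<in> ring_hom R A. \<Phi> ` carrier R = carrier A \<and> a_kernel R A \<Phi> = I
           \<and> (\<forall>x \<in> carrier R. \<phi> (\<Phi> x) = I +> x)"
proof -
  define \<Phi> where "\<Phi> = inv_into (carrier A) \<phi> \<circ> (+>) I"
  have inv: "inv_into (carrier A) \<phi> \<in> ring_iso (R Quot I) A" by (rule ring_iso_set_sym[OF A \<phi>])
  have \<phi>_bij: "bij_betw \<phi> (carrier A) (carrier (R Quot I))" using \<phi> by (simp add: ring_iso_def)
  have rcos_onto: "(+>) I ` carrier R = carrier (R Quot I)" by (auto simp: FactRing_def A_RCOSETS_def')
  have hom: "\<Phi> \<in> ring_hom R A"
    unfolding \<Phi>_def by (rule ring_hom_trans[OF rcos_ring_hom]) (use inv in \<open>simp add: ring_iso_def\<close>)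
  have onto: "\<Phi> ` carrier R = carrier A"
    unfolding \<Phi>_def image_comp[symmetric] rcos_onto using bij_betw_inv_into[OF \<phi>_bij]
    by (simp add: bij_betw_def)
  have \<phi>_\<Phi>: "\<phi> (\<Phi> x) = I +> x" if "x \<in> carrier R" for x
  proof -
    have "I +> x \<in> \<phi> ` carrier A" using that rcos_onto \<phi>_bij by (force simp: bij_betw_def)
    then show ?thesis unfolding \<Phi>_def by (simp add: f_inv_into_f)
  qed
  have "\<Phi> x = \<zero>\<^bsub>A\<^esub> \<longleftrightarrow> x \<in> I" if x: "x \<in> carrier R" for x
  proof -
    have "\<phi> \<zero>\<^bsub>A\<^esub> = I"
      using ring_hom_zero[OF _ A quotient_is_ring] \<phi> by (simp add: ring_iso_def FactRing_def)
    then have "\<Phi> x = \<zero>\<^bsub>A\<^esub> \<longleftrightarrow> I +> x = I"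
      using \<phi>_\<Phi>[OF x] \<phi>_bij ring_hom_closed[OF hom x] ring.ring_simprules(2)[OF A]
      by (metis bij_betw_def inj_on_def)
    also have "\<dots> \<longleftrightarrow> x \<in> I" using a_rcos_const a_rcos_self[OF x] by auto
    finally show ?thesis .
  qed
  then have "a_kernel R A \<Phi> = I" using Icarr by (auto simp: a_kernel_def')
  with hom onto \<phi>_\<Phi> show ?thesis by blast
qed

lemma presentation_of_surj_image:
  assumes F: "ring F" and Rel: "Rel \<subseteq> carrier F" and A: "ring A" and B: "ring B"
    and \<phi>: "\<phi> \<in> ring_iso A (F Quot genideal F Rel)"
    and noeth: "left_noetherian A \<or> right_noetherian A"
    and g: "g \<in> ring_hom A B" "g ` carrier A = carrier B"
  shows "\<exists>E \<psi>. finite E \<and> E \<subseteq> carrier F \<and> \<psi> \<in> ring_iso B (F Quot genideal F (Rel \<union> E)) \<and>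
           (\<forall>x \<in> carrier A. \<forall>f \<in> carrier F. \<phi> x = genideal F Rel +>\<^bsub>F\<^esub> f
              \<longrightarrow> \<psi> (g x) = genideal F (Rel \<union> E) +>\<^bsub>F\<^esub> f)"
proof -
  interpret F: ring F by (rule F)
  interpret I: ideal "genideal F Rel" F by (rule F.genideal_ideal[OF Rel])
  obtain \<Phi> where \<Phi>: "\<Phi> \<in> ring_hom F A" "\<Phi> ` carrier F = carrier A"
      "a_kernel F A \<Phi> = genideal F Rel" "\<forall>f \<in> carrier F. \<phi> (\<Phi> f) = genideal F Rel +>\<^bsub>F\<^esub> f"
    using I.ring_iso_FactRing_imp_surj_hom[OF A \<phi>] by blast
  interpret \<Phi>: ring_hom_ring F A \<Phi> by (rule ring_hom_ringI2[OF F A \<Phi>(1)])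
  interpret g\<Phi>: ring_hom_ring F B "g \<circ> \<Phi>" by (rule ring_hom_ringI2[OF F B ring_hom_trans[OF \<Phi>(1) g(1)]])
  let ?K = "a_kernel F B (g \<circ> \<Phi>)"
  have "g \<zero>\<^bsub>A\<^esub> = \<zero>\<^bsub>B\<^esub>" by (rule ring_hom_zero[OF g(1) A B])
  then have "a_kernel F A \<Phi> \<subseteq> ?K" unfolding a_kernel_def' by (simp add: subset_iff)
  then have "Rel \<subseteq> ?K" using \<Phi>(3) F.genideal_self[OF Rel] by blast
  then obtain E where E: "finite E" "E \<subseteq> ?K" "?K = genideal F (Rel \<union> E)"
    using F.ideal_finitely_generated_over[OF Rel g\<Phi>.kernel_is_ideal _
            \<Phi>.ideal_chain_above_kernel_stabilizes[OF \<Phi>(2) noeth, unfolded \<Phi>(3)]]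
    by blast
  have "(g \<circ> \<Phi>) ` carrier F = carrier B" by (simp only: image_comp[symmetric] \<Phi>(2) g(2))
  then obtain \<psi> where \<psi>: "\<psi> \<in> ring_iso B (F Quot ?K)" "\<forall>f \<in> carrier F. \<psi> (g (\<Phi> f)) = ?K +>\<^bsub>F\<^esub> f"
    using g\<Phi>.ring_iso_FactRing_kernel by force
  have "\<psi> (g x) = ?K +>\<^bsub>F\<^esub> f"
    if "x \<in> carrier A" "f \<in> carrier F" "\<phi> x = genideal F Rel +>\<^bsub>F\<^esub> f" for x f
  proof -
    have "\<phi> (\<Phi> f) = \<phi> x" using \<Phi>(4) that by simp
    moreover have "inj_on \<phi> (carrier A)" using \<phi> by (simp add: ring_iso_def bij_betw_def)
    ultimately have "\<Phi> f = x" using that(1) \<Phi>.hom_closed[OF that(2)] by (simp add: inj_on_eq_iff)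
    then show ?thesis using \<psi>(2) that(2) by blast
  qed
  moreover have "E \<subseteq> carrier F" using E(2) unfolding a_kernel_def' by blast
  ultimately show ?thesis using E(1) \<psi>(1) unfolding E(3) by blast
qed

lemma fp_ring_image:
  assumes R: "ring R" and noeth: "left_noetherian R \<or> right_noetherian R" and fp: "fp_ring R"
    and S: "ring S" and g: "g \<in> ring_hom R S" "g ` carrier R = carrier S"
  shows "fp_ring S"
proof -
  obtain n Rel \<phi> where Rel: "finite Rel" "Rel \<subseteq> carrier (free_alg \<Z> n)"
    and \<phi>: "\<phi> \<in> ring_iso R (free_alg \<Z> n Quot genideal (free_alg \<Z> n) Rel)"
    using fp unfolding fp_ring_def is_ring_iso_def by blast
  obtain E \<psi> where "finite E" "E \<subseteq> carrier (free_alg \<Z> n)"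
    "\<psi> \<in> ring_iso S (free_alg \<Z> n Quot genideal (free_alg \<Z> n) (Rel \<union> E))"
    using presentation_of_surj_image[OF ring.ring_free_alg[OF int.ring_axioms] Rel(2) R S \<phi> noeth g]
    by blast
  with Rel show ?thesis unfolding fp_ring_def is_ring_iso_def by blast
qed

lemma fp_alg_image:
  assumes K: "ring K" and A: "ring A" and \<iota>: "\<iota> \<in> ring_hom K A"
    and noeth: "left_noetherian A \<or> right_noetherian A" and fp: "fp_alg K A \<iota>"
    and B: "ring B" and g: "g \<in> ring_hom A B" "g ` carrier A = carrier B"
  shows "fp_alg K B (g \<circ> \<iota>)"
proof -
  obtain n Rel \<phi> where Rel: "finite Rel" "Rel \<subseteq> carrier (free_alg K n)"
    and \<phi>: "\<phi> \<in> ring_iso A (free_alg K n Quot genideal (free_alg K n) Rel)"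
    and \<phi>_\<iota>: "\<forall>c \<in> carrier K. \<phi> (\<iota> c) = genideal (free_alg K n) Rel +>\<^bsub>free_alg K n\<^esub> free_const K c"
    using fp unfolding fp_alg_def by blast
  obtain E \<psi> where E: "finite E" "E \<subseteq> carrier (free_alg K n)"
    and \<psi>: "\<psi> \<in> ring_iso B (free_alg K n Quot genideal (free_alg K n) (Rel \<union> E))"
    and lift: "\<forall>x \<in> carrier A. \<forall>f \<in> carrier (free_alg K n).
                 \<phi> x = genideal (free_alg K n) Rel +>\<^bsub>free_alg K n\<^esub> f
                 \<longrightarrow> \<psi> (g x) = genideal (free_alg K n) (Rel \<union> E) +>\<^bsub>free_alg K n\<^esub> f"
    using presentation_of_surj_image[OF ring.ring_free_alg[OF K] Rel(2) A B \<phi> noeth g] by blast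
  have "\<forall>c \<in> carrier K. \<psi> ((g \<circ> \<iota>) c) = genideal (free_alg K n) (Rel \<union> E) +>\<^bsub>free_alg K n\<^esub> free_const K c"
    using lift \<phi>_\<iota> ring_hom_closed[OF \<iota>] ring.free_const_closed[OF K] by simp
  with Rel E \<psi> show ?thesis unfolding fp_alg_def by blast
qed

theorem lemma4p2:
  shows "(\<forall>(R :: ('a, 'b) ring_scheme) (S :: ('c, 'd) ring_scheme) g.
            ring R \<and> (left_noetherian R \<or> right_noetherian R) \<and> fp_ring R \<and>
            ring S \<and> g \<in> ring_hom R S \<and> g ` carrier R = carrier S
            \<longrightarrow> fp_ring S)
       \<and> (\<forall>(K :: ('k, 'm) ring_scheme) (A :: ('e, 'f) ring_scheme) \<iota> (B :: ('g, 'h) ring_scheme) g.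
            is_algebra K A \<iota> \<and> (left_noetherian A \<or> right_noetherian A) \<and> fp_alg K A \<iota> \<and>
            ring B \<and> g \<in> ring_hom A B \<and> g ` carrier A = carrier B
            \<longrightarrow> fp_alg K B (g \<circ> \<iota>))"
  unfolding is_algebra_def
  by (intro conjI allI impI; elim conjE) (simp_all add: fp_ring_image fp_alg_image cring.axioms(1))

end
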